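(* For every sufficiently large integer $m$ there exists a bipartite graph $H$ with an odd number of edges, maximum degree at most $102$, and vertex classes $A_1\cup A_2$ and $B_1\cup B_2$ (with $A_1,A_2,B_1,B_2$ pairwise disjoint), where $|A_1|=|B_1|=2m$ and $|A_2|=|B_2|=5m$, such that for every $A_1'\subseteq A_1$ and $B_1'\subseteq B_1$ with $|A_1'|=|B_1'|\ge m$, there is a perfect matching in $H$ between $A_1'\cup A_2$ and $B_1'\cup B_2$. *)

theory Defs
  imports Main
begin

text \<open>A bipartite graph with vertex classes A and B (disjoint) is represented by its
edge set E \<subseteq> A \<times> B; the pair (a,b) stands for the edge {a,b}.\<close>

definition bip_graph :: "'a set \<Rightarrow> 'a set \<Rightarrow> ('a \<times> 'a) set \<Rightarrow> bool" where
  "bip_graph A B E \<longleftrightarrow> finite A \<and> finite B \<and> A \<inter> B = {} \<and> E \<subseteq> A \<times> B"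

definition bdegree :: "('a \<times> 'a) set \<Rightarrow> 'a \<Rightarrow> nat" where
  "bdegree E v = card {e \<in> E. fst e = v \<or> snd e = v}"

definition max_degree_le :: "'a set \<Rightarrow> 'a set \<Rightarrow> ('a \<times> 'a) set \<Rightarrow> nat \<Rightarrow> bool" where
  "max_degree_le A B E d \<longleftrightarrow> (\<forall>v \<in> A \<union> B. bdegree E v \<le> d)"

definition perfect_matching_between ::
    "('a \<times> 'a) set \<Rightarrow> 'a set \<Rightarrow> 'a set \<Rightarrow> ('a \<times> 'a) set \<Rightarrow> bool" where
  "perfect_matching_between E X Y M \<longleftrightarrow>
     M \<subseteq> E \<and> M \<subseteq> X \<times> Y \<and>
     (\<forall>x\<in>X. \<exists>!y. (x, y) \<in> M) \<and> (\<forall>y\<in>Y. \<exists>!x. (x, y) \<in> M)"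

end

(*
  Put A = A1 \<union> A2 = {0..<7m} and B = B1 \<union> B2 = {7m..<14m}.  Join every vertex of A to B2, and
  every vertex of B to A2, along 32 injections into 10m slots, two slots per target vertex.  By a
  union bound over all candidate violating pairs (X, W), some choice of injections expands: sets
  of at most m vertices have at least as many neighbours, and larger sets see at least half of
  the 5m targets.  Hall's condition then holds between A1' \<union> A2 and B1' \<union> B2: a violator S
  sees half of B2, the part Y of B1' \<union> B2 it misses violates Hall's condition backwards and so
  sees half of A2 outside S, and counting S and Y against these halves gives |A1'| > 2m.  The
  degrees are at most 3 \<cdot> 32 = 96, and one extra edge adjusts the parity.
*)

theory Submission
  imports Defs Complex_Main
begin

section \<open>Hall's marriage theorem\<close>

definition neighbours :: "('a \<times> 'b) set \<Rightarrow> 'a set \<Rightarrow> 'b set \<Rightarrow> 'b set" where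
  "neighbours E S Y = {y \<in> Y. \<exists>x\<in>S. (x, y) \<in> E}"

definition hall_condition :: "('a \<times> 'b) set \<Rightarrow> 'a set \<Rightarrow> 'b set \<Rightarrow> bool" where
  "hall_condition E X Y \<longleftrightarrow> (\<forall>S\<subseteq>X. card S \<le> card (neighbours E S Y))"

definition system_of_representatives :: "('a \<times> 'b) set \<Rightarrow> 'a set \<Rightarrow> 'b set \<Rightarrow> ('a \<Rightarrow> 'b) \<Rightarrow> bool" where
  "system_of_representatives E X Y h \<longleftrightarrow> inj_on h X \<and> (\<forall>x\<in>X. h x \<in> Y \<and> (x, h x) \<in> E)"

lemma system_of_representatives_glue:
  assumes "system_of_representatives E S Y1 h1" "system_of_representatives E T Y2 h2"
    and "S \<inter> T = {}" "Y1 \<inter> Y2 = {}"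
  shows "system_of_representatives E (S \<union> T) (Y1 \<union> Y2) (\<lambda>x. if x \<in> S then h1 x else h2 x)"
proof -
  have "inj_on (\<lambda>x. if x \<in> S then h1 x else h2 x) (S \<union> T)"
    using assms unfolding system_of_representatives_def inj_on_def
    by (smt (verit) UnE disjoint_iff)
  then show ?thesis
    using assms by (auto simp: system_of_representatives_def)
qed

lemma hall_condition_critical_part:
  assumes "hall_condition E X Y" "S \<subseteq> X"
  shows "hall_condition E S (neighbours E S Y)"
  unfolding hall_condition_def
proof (intro allI impI)
  fix T assume "T \<subseteq> S"
  then have "neighbours E T (neighbours E S Y) = neighbours E T Y"
    by (auto simp: neighbours_def)
  with assms \<open>T \<subseteq> S\<close> show "card T \<le> card (neighbours E T (neighbours E S Y))"
    by (simp add: hall_condition_def)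
qed

text \<open>A deficient \<open>T\<close> in the rest would make \<open>T \<union> S\<close> deficient in the whole graph.\<close>
lemma hall_condition_critical_rest:
  assumes hall: "hall_condition E X Y" and fin: "finite X" "finite Y"
    and S: "S \<subseteq> X" "card (neighbours E S Y) = card S"
  shows "hall_condition E (X - S) (Y - neighbours E S Y)"
  unfolding hall_condition_def
proof (intro allI impI)
  fix T assume T: "T \<subseteq> X - S"
  let ?N = "neighbours E"
  have fin_N: "finite (?N R Y)" for R using fin by (simp add: neighbours_def)
  have "card T + card S = card (T \<union> S)"
    using T S(1) fin by (subst card_Un_disjoint) (auto intro: finite_subset)
  also have "\<dots> \<le> card (?N (T \<union> S) Y)"
    using hall[unfolded hall_condition_def, rule_format, of "T \<union> S"] T S(1) by auto
  also have "?N (T \<union> S) Y = (?N T Y - ?N S Y) \<union> ?N S Y"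
    by (auto simp: neighbours_def)
  also have "card \<dots> = card (?N T Y - ?N S Y) + card S"
    using fin_N S(2) by (subst card_Un_disjoint) auto
  also have "?N T Y - ?N S Y = ?N T (Y - ?N S Y)"
    by (auto simp: neighbours_def)
  finally show "card T \<le> card (?N T (Y - ?N S Y))" by simp
qed

lemma hall_condition_remove_edge:
  assumes surplus: "\<And>S. S \<subseteq> X \<Longrightarrow> S \<noteq> {} \<Longrightarrow> S \<noteq> X \<Longrightarrow> card S < card (neighbours E S Y)"
    and fin: "finite Y" and x: "x \<in> X"
  shows "hall_condition E (X - {x}) (Y - {y})"
  unfolding hall_condition_def
proof (intro allI impI)
  fix T assume T: "T \<subseteq> X - {x}"
  show "card T \<le> card (neighbours E T (Y - {y}))"
  proof (cases "T = {}")
    case False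
    with T x have "card T < card (neighbours E T Y)" by (intro surplus) auto
    moreover have "neighbours E T (Y - {y}) = neighbours E T Y - {y}"
      by (auto simp: neighbours_def)
    moreover have "finite (neighbours E T Y)" using fin by (simp add: neighbours_def)
    moreover have "card (neighbours E T Y) \<le> Suc (card (neighbours E T Y - {y}))"
      using \<open>finite (neighbours E T Y)\<close>
      by (cases "y \<in> neighbours E T Y") (auto simp: card_Diff_singleton_if card_gt_0_iff)
    ultimately show ?thesis by simp
  qed simp
qed

lemma hall_marriage_step_critical:
  assumes IH: "\<And>X' Y'. card X' < card X \<Longrightarrow> finite X' \<Longrightarrow> finite Y' \<Longrightarrow>
      hall_condition E X' Y' \<Longrightarrow> \<exists>h. system_of_representatives E X' Y' h"
    and fin: "finite X" "finite Y" and hall: "hall_condition E X Y"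
    and S: "S \<subseteq> X" "S \<noteq> {}" "S \<noteq> X" "card (neighbours E S Y) \<le> card S"
  shows "\<exists>h. system_of_representatives E X Y h"
proof -
  have fin_S: "finite S" using S(1) fin(1) by (rule finite_subset)
  have "card S \<le> card (neighbours E S Y)"
    using hall S(1) unfolding hall_condition_def by blast
  with S(4) have critical: "card (neighbours E S Y) = card S" by simp
  have "card S < card X"
    using S fin(1) by (intro psubset_card_mono) auto
  moreover have "finite (neighbours E S Y)"
    using fin(2) by (simp add: neighbours_def)
  ultimately obtain h1 where h1: "system_of_representatives E S (neighbours E S Y) h1"
    using IH[OF _ fin_S _ hall_condition_critical_part[OF hall S(1)]] by blast
  have "0 < card S" using S(2) fin_S by auto
  then have "card (X - S) < card X"
    using S(1) fin_S card_mono[OF fin(1) S(1)] by (simp add: card_Diff_subset)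
  then obtain h2 where h2: "system_of_representatives E (X - S) (Y - neighbours E S Y) h2"
    using IH[OF _ _ _ hall_condition_critical_rest[OF hall fin S(1) critical]] fin by blast
  have "system_of_representatives E (S \<union> (X - S)) (neighbours E S Y \<union> (Y - neighbours E S Y))
          (\<lambda>x. if x \<in> S then h1 x else h2 x)"
    by (rule system_of_representatives_glue[OF h1 h2]) auto
  moreover have "S \<union> (X - S) = X" "neighbours E S Y \<union> (Y - neighbours E S Y) = Y"
    using S(1) by (auto simp: neighbours_def)
  ultimately show ?thesis by metis
qed

lemma hall_marriage_step_surplus:
  assumes IH: "\<And>X' Y'. card X' < card X \<Longrightarrow> finite X' \<Longrightarrow> finite Y' \<Longrightarrow>
      hall_condition E X' Y' \<Longrightarrow> \<exists>h. system_of_representatives E X' Y' h"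
    and fin: "finite X" "finite Y" and hall: "hall_condition E X Y" and "X \<noteq> {}"
    and surplus: "\<And>S. S \<subseteq> X \<Longrightarrow> S \<noteq> {} \<Longrightarrow> S \<noteq> X \<Longrightarrow> card S < card (neighbours E S Y)"
  shows "\<exists>h. system_of_representatives E X Y h"
proof -
  obtain x where x: "x \<in> X" using \<open>X \<noteq> {}\<close> by blast
  have "card {x} \<le> card (neighbours E {x} Y)"
    using hall x unfolding hall_condition_def by blast
  then have "neighbours E {x} Y \<noteq> {}" by auto
  then obtain y where y: "y \<in> Y" "(x, y) \<in> E"
    by (auto simp: neighbours_def)
  obtain h where h: "system_of_representatives E (X - {x}) (Y - {y}) h"
    using IH[of "X - {x}" "Y - {y}"] fin card_Diff1_less[OF fin(1) x]
      hall_condition_remove_edge[OF surplus fin(2) x] by blast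
  have "system_of_representatives E X Y (h(x := y))"
    using h x y unfolding system_of_representatives_def inj_on_def by auto
  then show ?thesis by blast
qed

theorem hall_marriage:
  assumes "finite X" "finite Y" "hall_condition E X Y"
  shows "\<exists>h. system_of_representatives E X Y h"
  using assms
proof (induction "card X" arbitrary: X Y rule: less_induct)
  case less
  consider "X = {}"
    | "X \<noteq> {}" "\<exists>S. S \<subseteq> X \<and> S \<noteq> {} \<and> S \<noteq> X \<and> card (neighbours E S Y) \<le> card S"
    | "X \<noteq> {}" "\<And>S. S \<subseteq> X \<Longrightarrow> S \<noteq> {} \<Longrightarrow> S \<noteq> X \<Longrightarrow> card S < card (neighbours E S Y)"
    by (meson not_le)
  then show ?case
  proof cases
    case 1
    then show ?thesis by (auto simp: system_of_representatives_def)
  next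
    case 2
    then show ?thesis using hall_marriage_step_critical[OF less.hyps less.prems] by blast
  next
    case 3
    then show ?thesis using hall_marriage_step_surplus[OF less.hyps less.prems] by blast
  qed
qed

lemma hall_condition_mono:
  assumes "hall_condition E X Y" "E \<subseteq> F" "finite Y"
  shows "hall_condition F X Y"
  unfolding hall_condition_def
proof (intro allI impI)
  fix S assume "S \<subseteq> X"
  then have "card S \<le> card (neighbours E S Y)" using assms(1) by (simp add: hall_condition_def)
  also have "\<dots> \<le> card (neighbours F S Y)"
    using assms(2,3) by (intro card_mono) (auto simp: neighbours_def)
  finally show "card S \<le> card (neighbours F S Y)" .
qed

lemma perfect_matching_of_system_of_representatives:
  assumes h: "system_of_representatives E X Y h"
    and fin: "finite Y" and card: "card X = card Y"
  shows "perfect_matching_between E X Y ((\<lambda>x. (x, h x)) ` X)"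
proof -
  have "h ` X \<subseteq> Y" "card (h ` X) = card Y"
    using h card by (auto simp: system_of_representatives_def card_image)
  then have onto: "h ` X = Y" using fin by (simp add: card_subset_eq)
  show ?thesis
    unfolding perfect_matching_between_def
  proof (intro conjI ballI)
    fix y assume "y \<in> Y"
    then obtain x where "x \<in> X" "h x = y" using onto by blast
    then show "\<exists>!x'. (x', y) \<in> (\<lambda>x. (x, h x)) ` X"
      using h by (auto simp: system_of_representatives_def inj_on_def)
  qed (use h in \<open>auto simp: system_of_representatives_def\<close>)
qed

corollary hall_perfect_matching:
  assumes "finite X" "finite Y" "card X = card Y" "hall_condition E X Y"
  shows "\<exists>M. perfect_matching_between E X Y M"
  using hall_marriage[OF assms(1,2,4)] perfect_matching_of_system_of_representatives assms(2,3)
  by blast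

section \<open>Counting injective lists\<close>

fun falling :: "nat \<Rightarrow> nat \<Rightarrow> nat" where
  "falling a 0 = 1"
| "falling a (Suc k) = (a - k) * falling a k"

lemma falling_Suc_left: "falling a (Suc k) = a * falling (a - 1) k"
  by (induction k) (simp_all add: algebra_simps)

lemma falling_eq_0: "a < k \<Longrightarrow> falling a k = 0"
  by (induction k) (auto simp: less_Suc_eq)

lemma falling_pos: "n \<le> N \<Longrightarrow> 0 < falling N n"
  by (induction n) auto

lemma falling_add: "falling N (j + k) = falling N j * falling (N - j) k"
  by (induction k) (simp_all add: algebra_simps)

lemma falling_mult_power_le: "s \<le> N \<Longrightarrow> falling s j * N ^ j \<le> s ^ j * falling N j"
proof (induction j)
  case (Suc j)
  have "(s - j) * N \<le> s * (N - j)"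
    using Suc.prems by (simp add: algebra_simps diff_mult_distrib diff_mult_distrib2 diff_le_mono2)
  from mult_le_mono[OF this Suc.IH[OF Suc.prems]] show ?case
    by (simp add: algebra_simps)
qed simp

lemma falling_eq_prod: "n \<le> N \<Longrightarrow> falling N n = \<Prod>{N - n + 1..N}"
proof (induction n)
  case (Suc n)
  then have "{N - Suc n + 1..N} = insert (N - n) {N - n + 1..N}" by auto
  with Suc show ?case by simp
qed simp

lemma card_distinct_lists:
  assumes "finite A" "n \<le> card A"
  shows "card {xs. length xs = n \<and> distinct xs \<and> set xs \<subseteq> A} = falling (card A) n"
  using card_lists_distinct_length_eq[OF assms] falling_eq_prod[OF assms(2)] by simp

definition lists_through :: "nat \<Rightarrow> 'a set \<Rightarrow> 'a set \<Rightarrow> nat set \<Rightarrow> 'a list set" where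
  "lists_through n B S X =
     {xs. length xs = n \<and> distinct xs \<and> set xs \<subseteq> B \<and> (\<forall>i\<in>X. xs ! i \<in> S)}"

lemma finite_lists_through: "finite B \<Longrightarrow> finite (lists_through n B S X)"
  unfolding lists_through_def
  by (rule finite_subset[OF _ finite_lists_length_eq[of B n]]) auto

lemma lists_through_Suc_subset:
  assumes "S \<subseteq> B" "X \<subseteq> {0..<Suc n}"
  shows "lists_through (Suc n) B S X \<subseteq>
    (\<Union>x\<in>(if 0 \<in> X then S else B). (#) x ` lists_through n (B - {x}) (S - {x}) {i. Suc i \<in> X})"
proof
  fix xs assume xs: "xs \<in> lists_through (Suc n) B S X"
  then obtain x ys where xys: "xs = x # ys"
    unfolding lists_through_def by (cases xs) auto
  have "x \<in> (if 0 \<in> X then S else B)"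
    using xs xys by (auto simp: lists_through_def)
  moreover have "ys ! i \<in> S - {x}" if "Suc i \<in> X" for i
  proof -
    have "i < length ys" "xs ! Suc i \<in> S" "distinct (x # ys)"
      using that xs xys assms(2) by (auto simp: lists_through_def)
    then show ?thesis using xys nth_mem by fastforce
  qed
  then have "ys \<in> lists_through n (B - {x}) (S - {x}) {i. Suc i \<in> X}"
    using xs xys by (auto simp: lists_through_def)
  ultimately show "xs \<in> (\<Union>x\<in>(if 0 \<in> X then S else B).
      (#) x ` lists_through n (B - {x}) (S - {x}) {i. Suc i \<in> X})"
    using xys by blast
qed

lemma card_Suc_preimage:
  assumes "finite X"
  shows "card X = card {i. Suc i \<in> X} + (if 0 \<in> X then 1 else 0)"
proof -
  have "X = (if 0 \<in> X then {0} else {}) \<union> Suc ` {i. Suc i \<in> X}"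
  proof (rule set_eqI)
    show "x \<in> X \<longleftrightarrow> x \<in> (if 0 \<in> X then {0} else {}) \<union> Suc ` {i. Suc i \<in> X}" for x
      by (cases x) auto
  qed
  moreover have "finite {i. Suc i \<in> X}"
    using assms by (simp add: finite_vimageI vimage_def[symmetric])
  moreover have "card ((if 0 \<in> X then {0} else {}) \<union> Suc ` {i. Suc i \<in> X})
      = (if 0 \<in> X then 1 else 0) + card (Suc ` {i. Suc i \<in> X})"
    using \<open>finite {i. Suc i \<in> X}\<close> by (auto simp: card_insert_if)
  ultimately show ?thesis by (simp add: card_image)
qed

lemma card_lists_through_Suc_le:
  assumes "finite B" "S \<subseteq> B" "X \<subseteq> {0..<Suc n}"
  shows "card (lists_through (Suc n) B S X) \<le>
    (\<Sum>x\<in>(if 0 \<in> X then S else B). card (lists_through n (B - {x}) (S - {x}) {i. Suc i \<in> X}))"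
proof -
  let ?D = "if 0 \<in> X then S else B"
  have "finite ?D" using assms(1,2) finite_subset by auto
  have "card (lists_through (Suc n) B S X) \<le>
      card (\<Union>x\<in>?D. (#) x ` lists_through n (B - {x}) (S - {x}) {i. Suc i \<in> X})"
    using lists_through_Suc_subset[OF assms(2,3)] \<open>finite ?D\<close> assms(1)
    by (intro card_mono) (auto simp: finite_lists_through)
  also have "\<dots> \<le> (\<Sum>x\<in>?D. card ((#) x ` lists_through n (B - {x}) (S - {x}) {i. Suc i \<in> X}))"
    by (rule card_UN_le[OF \<open>finite ?D\<close>])
  also have "\<dots> \<le> (\<Sum>x\<in>?D. card (lists_through n (B - {x}) (S - {x}) {i. Suc i \<in> X}))"
    using assms(1) by (intro sum_mono card_image_le finite_lists_through) simp
  finally show ?thesis .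
qed

lemma falling_split:
  assumes "s \<le> N"
  shows "s * falling (s - 1) j + (N - s) * falling s j = (N - j) * falling s j"
proof -
  have "s * falling (s - 1) j = (s - j) * falling s j"
    using falling_Suc_left[of s j] by simp
  then have "s * falling (s - 1) j + (N - s) * falling s j = ((s - j) + (N - s)) * falling s j"
    by (simp add: add_mult_distrib)
  also have "\<dots> = (N - j) * falling s j"
    using assms falling_eq_0[of s j] by (cases "j \<le> s") auto
  finally show ?thesis .
qed

lemma sum_falling_tails:
  assumes "finite B" "S \<subseteq> B" "j \<le> n"
  shows "(\<Sum>x\<in>(if z then S else B). falling (card (S - {x})) j * falling (card (B - {x}) - j) (n - j))
    = (if z then falling (card S) (Suc j) * falling (card B - Suc j) (n - j)
       else falling (card S) j * falling (card B - j) (Suc n - j))"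
proof -
  define s where "s = card S"
  define N where "N = card B"
  let ?c = "falling (N - 1 - j) (n - j)"
  have "finite S" using assms(1,2) finite_subset by blast
  have "s \<le> N" unfolding s_def N_def using assms(1,2) by (rule card_mono)
  have summand: "falling (card (S - {x})) j * falling (card (B - {x}) - j) (n - j)
      = (if x \<in> S then falling (s - 1) j * ?c else falling s j * ?c)" if "x \<in> B" for x
    using that assms(1) \<open>finite S\<close> by (simp add: s_def N_def)
  show ?thesis
  proof (cases z)
    case True
    have "(\<Sum>x\<in>S. falling (card (S - {x})) j * falling (card (B - {x}) - j) (n - j))
        = (\<Sum>x\<in>S. if x \<in> S then falling (s - 1) j * ?c else falling s j * ?c)"
      using summand assms(2) by (intro sum.cong) blast+
    also have "\<dots> = s * (falling (s - 1) j * ?c)" by (simp add: s_def)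
    also have "\<dots> = falling s (Suc j) * falling (N - Suc j) (n - j)"
      by (simp only: falling_Suc_left) (simp add: diff_diff_add)
    finally show ?thesis using True by (simp add: s_def N_def)
  next
    case False
    have "(\<Sum>x\<in>B. falling (card (S - {x})) j * falling (card (B - {x}) - j) (n - j))
        = (\<Sum>x\<in>B. if x \<in> S then falling (s - 1) j * ?c else falling s j * ?c)"
      by (rule sum.cong[OF refl summand])
    also have "\<dots> = s * (falling (s - 1) j * ?c) + (N - s) * (falling s j * ?c)"
      using assms(1,2) \<open>finite S\<close>
      by (simp add: sum.If_cases Int_absorb1 Diff_eq[symmetric] card_Diff_subset s_def N_def)
    also have "\<dots> = (s * falling (s - 1) j + (N - s) * falling s j) * ?c"
      by (simp add: algebra_simps)
    also have "\<dots> = falling s j * falling (N - j) (Suc n - j)"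
      using falling_split[OF \<open>s \<le> N\<close>, of j] falling_Suc_left[of "N - j" "n - j"] assms(3)
      by (simp add: Suc_diff_le diff_diff_add)
    finally show ?thesis using False by (simp add: s_def N_def)
  qed
qed

lemma card_lists_through_le:
  assumes "finite B" "S \<subseteq> B" "X \<subseteq> {0..<n}"
  shows "card (lists_through n B S X) \<le>
    falling (card S) (card X) * falling (card B - card X) (n - card X)"
  using assms
proof (induction n arbitrary: B S X)
  case 0
  then have "X = {}" by auto
  moreover have "lists_through 0 B S {} = {[]}" by (auto simp: lists_through_def)
  ultimately show ?case by simp
next
  case (Suc n)
  define X' where "X' = {i. Suc i \<in> X}"
  define j where "j = card X'"
  have X': "X' \<subseteq> {0..<n}" using Suc.prems(3) by (auto simp: X'_def)
  then have "j \<le> n" using card_mono[OF _ X'] by (simp add: j_def)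
  have "finite X" using Suc.prems(3) finite_subset by blast
  then have card_X: "card X = (if 0 \<in> X then Suc j else j)"
    using card_Suc_preimage by (simp add: j_def X'_def)
  have "card (lists_through (Suc n) B S X)
      \<le> (\<Sum>x\<in>(if 0 \<in> X then S else B). card (lists_through n (B - {x}) (S - {x}) X'))"
    unfolding X'_def by (rule card_lists_through_Suc_le[OF Suc.prems])
  also have "\<dots> \<le> (\<Sum>x\<in>(if 0 \<in> X then S else B).
      falling (card (S - {x})) j * falling (card (B - {x}) - j) (n - j))"
    using Suc.prems X' unfolding j_def by (intro sum_mono Suc.IH) (auto split: if_splits)
  also have "\<dots> = (if 0 \<in> X then falling (card S) (Suc j) * falling (card B - Suc j) (n - j)
       else falling (card S) j * falling (card B - j) (Suc n - j))"
    by (rule sum_falling_tails[OF Suc.prems(1,2) \<open>j \<le> n\<close>])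
  finally show ?case using card_X by (simp split: if_splits)
qed

lemma card_lists_through_le_ratio:
  assumes "finite B" "S \<subseteq> B" "X \<subseteq> {0..<n}" "n \<le> card B" "B \<noteq> {}"
  shows "real (card (lists_through n B S X)) \<le>
    (real (card S) / real (card B)) ^ card X * real (falling (card B) n)"
proof -
  define j where "j = card X"
  have "j \<le> n" unfolding j_def using card_mono[OF _ assms(3)] by simp
  have "card S \<le> card B" using assms(1,2) by (rule card_mono)
  have "card (lists_through n B S X) * card B ^ j
      \<le> falling (card S) j * card B ^ j * falling (card B - j) (n - j)"
    using card_lists_through_le[OF assms(1-3)] by (simp add: j_def)
  also have "\<dots> \<le> card S ^ j * falling (card B) j * falling (card B - j) (n - j)"
    using falling_mult_power_le[OF \<open>card S \<le> card B\<close>] by simp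
  also have "\<dots> = card S ^ j * falling (card B) n"
    using falling_add[of "card B" j "n - j"] \<open>j \<le> n\<close> by simp
  finally have "real (card (lists_through n B S X)) * real (card B) ^ j
      \<le> real (card S) ^ j * real (falling (card B) n)"
    by (metis of_nat_le_iff of_nat_mult of_nat_power)
  moreover have "real (card B) > 0" using assms(1,5) by (simp add: card_gt_0_iff)
  ultimately show ?thesis by (simp add: j_def field_simps)
qed

section \<open>Binomial estimates\<close>

lemma power_self_le_exp_mult_fact: "real j ^ j \<le> exp (real j) * fact j"
proof (induction j)
  case (Suc j)
  have "real (Suc j) ^ j \<le> real j ^ j * exp 1"
  proof (cases "j = 0")
    case False
    have "real (Suc j) ^ j = real j ^ j * (1 + 1 / real j) ^ j"
      using False by (simp add: field_simps flip: power_mult_distrib)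
    also have "(1 + 1 / real j) ^ j \<le> exp (1 / real j) ^ j"
      by (intro power_mono exp_ge_add_one_self) simp
    also have "exp (1 / real j) ^ j = exp 1"
      using False by (simp flip: exp_of_nat_mult)
    finally show ?thesis by (simp add: mult_left_mono)
  qed simp
  then have "real (Suc j) ^ Suc j \<le> real (Suc j) * (real j ^ j * exp 1)"
    by (simp add: mult_left_mono)
  also have "\<dots> \<le> real (Suc j) * (exp (real j) * fact j * exp 1)"
    using Suc.IH by (intro mult_left_mono mult_right_mono) auto
  also have "\<dots> = exp (real (Suc j)) * fact (Suc j)"
    by (simp add: exp_add[symmetric] algebra_simps)
  finally show ?case .
qed simp

lemma binomial_le_power_div_fact: "real (n choose j) \<le> real n ^ j / fact j"
proof -
  have "real ((n choose j) * fact j) \<le> real (n ^ j)"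
    using binomial_fact_pow[of n j] by linarith
  then show ?thesis by (simp add: field_simps)
qed

lemma binomial_pred_le_power_div_fact:
  assumes "1 \<le> j" "j \<le> n"
  shows "real (n choose (j - 1)) \<le> real n ^ j / fact j"
proof -
  obtain k where k: "j = Suc k" using assms(1) by (cases j) auto
  have "real (n choose k) \<le> real n ^ k / fact k" by (rule binomial_le_power_div_fact)
  also have "\<dots> = real n ^ k * real j / fact j" by (simp add: k)
  also have "\<dots> \<le> real n ^ k * real n / fact j"
    using assms by (intro divide_right_mono mult_left_mono) auto
  finally show ?thesis by (simp add: k mult.commute)
qed

lemma binomial_product_le:
  assumes "1 \<le> j" "j \<le> b"
  shows "real (a choose j) * real (b choose (j - 1)) \<le> (real a * real b * exp 2 / real j ^ 2) ^ j"
proof -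
  have inv_fact: "1 / fact j \<le> exp (real j) / real j ^ j"
    using power_self_le_exp_mult_fact[of j] assms by (simp add: field_simps)
  have "real (a choose j) * real (b choose (j - 1)) \<le> (real a ^ j / fact j) * (real b ^ j / fact j)"
    by (intro mult_mono binomial_le_power_div_fact binomial_pred_le_power_div_fact assms) auto
  also have "\<dots> = (real a * real b) ^ j * (1 / fact j) ^ 2"
    by (simp add: power_mult_distrib power2_eq_square)
  also have "\<dots> \<le> (real a * real b) ^ j * (exp (real j) / real j ^ j) ^ 2"
    by (intro mult_left_mono power_mono inv_fact) auto
  also have "\<dots> = (real a * real b * exp 2 / real j ^ 2) ^ j"
    by (simp add: field_simps flip: exp_of_nat_mult power_mult)
  finally show ?thesis .
qed

lemma ratio_mult_power_le_quarter:
  assumes "0 < j" "j \<le> m"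
  shows "real (7 * m) * real (5 * m) * exp 2 / real j ^ 2 * (real j / (5 * real m)) ^ 32 \<le> 1/4"
proof -
  have "real (7 * m) * real (5 * m) * exp 2 / real j ^ 2 * (real j / (5 * real m)) ^ 32
      = 35 * exp 2 / 5 ^ 32 * (real j / real m) ^ 30"
    using assms by (simp add: field_simps) (simp add: power2_eq_square flip: power_Suc)
  also have "\<dots> \<le> 35 * exp 2 / 5 ^ 32 * 1"
    using assms by (intro mult_left_mono power_le_one) auto
  also have "\<dots> \<le> 35 * 3 ^ 2 / 5 ^ 32 * 1"
    using exp_le power_mono[of "exp 1" "3::real" 2]
    by (simp add: exp_of_nat_mult[of 2 1, simplified])
  finally show ?thesis by simp
qed

lemma binomial_term_le_quarter_power:
  assumes "1 \<le> j" "j \<le> m"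
  shows "real (7 * m choose j) * real (5 * m choose (j - 1)) * (real j / (5 * real m)) ^ (j * 32)
    \<le> (1/4) ^ j"
proof -
  have "real (7 * m choose j) * real (5 * m choose (j - 1)) * (real j / (5 * real m)) ^ (j * 32)
      \<le> (real (7 * m) * real (5 * m) * exp 2 / real j ^ 2) ^ j * ((real j / (5 * real m)) ^ 32) ^ j"
    using assms unfolding mult.commute[of j 32] power_mult
    by (intro mult_right_mono binomial_product_le) auto
  also have "\<dots> = (real (7 * m) * real (5 * m) * exp 2 / real j ^ 2 * (real j / (5 * real m)) ^ 32) ^ j"
    by (rule power_mult_distrib[symmetric])
  also have "\<dots> \<le> (1/4) ^ j"
    using assms ratio_mult_power_le_quarter[of j m] by (intro power_mono) auto
  finally show ?thesis .
qed

lemma binomials_mult_power_le: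
  assumes "m \<ge> 1"
  shows "real (7 * m choose k) * real (5 * m choose l) * (7/10) ^ (32 * m) \<le> 1/20"
proof -
  have "real (n choose i) \<le> 2 ^ n" for n i
    using binomial_le_pow2[of n i] by (metis of_nat_le_iff of_nat_numeral of_nat_power)
  then have "real (7 * m choose k) * real (5 * m choose l) \<le> 2 ^ (7 * m) * 2 ^ (5 * m)"
    by (intro mult_mono) auto
  then have "real (7 * m choose k) * real (5 * m choose l) * (7/10) ^ (32 * m)
      \<le> 2 ^ (12 * m) * (7/10) ^ (32 * m)"
    by (intro mult_right_mono) (simp_all flip: power_add)
  also have "\<dots> = (4096 * (7/10::real) ^ 32) ^ m"
    by (simp add: power_mult power_mult_distrib)
  also have "\<dots> \<le> (1/20) ^ m"
    by (intro power_mono) (simp_all add: power_divide)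
  also have "\<dots> \<le> 1/20"
    using power_decreasing[of 1 m "1/20::real"] assms by simp
  finally show ?thesis .
qed

lemma sum_quarter_powers_le: "(\<Sum>j\<in>{1..m}. (1/4::real) ^ j) \<le> 1/3"
proof -
  have "(\<Sum>j\<in>{1..m}. (1/4::real) ^ j) = 1/3 - (1/3) * (1/4) ^ m"
    by (induction m) simp_all
  then show ?thesis by simp
qed

section \<open>Expanding families of injections\<close>

text \<open>A distinct list of length \<open>7 m\<close> over \<open>{0..<10 m}\<close> is an injection of \<open>{0..<7 m}\<close> into
  \<open>10 m\<close> slots; slot \<open>s\<close> belongs to the vertex \<open>s div 2\<close> of \<open>{0..<5 m}\<close>, so each vertex is hit
  at most twice.\<close>
definition slot_injections :: "nat \<Rightarrow> nat list set" where
  "slot_injections m = {l. length l = 7 * m \<and> distinct l \<and> set l \<subseteq> {0..<10 * m}}"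

definition pair_nbhd :: "nat list list \<Rightarrow> nat set \<Rightarrow> nat set" where
  "pair_nbhd ls X = {l ! x div 2 | l x. l \<in> set ls \<and> x \<in> X}"

definition expanding :: "nat \<Rightarrow> nat list list \<Rightarrow> bool" where
  "expanding m ls \<longleftrightarrow>
     (\<forall>X \<subseteq> {0..<7 * m}. card X \<le> m \<longrightarrow> card X \<le> card (pair_nbhd ls X)) \<and>
     (\<forall>X \<subseteq> {0..<7 * m}. m < card X \<longrightarrow> 7 * m \<le> 2 * card (pair_nbhd ls X))"

lemma pair_nbhd_mono: "X \<subseteq> Y \<Longrightarrow> pair_nbhd ls X \<subseteq> pair_nbhd ls Y"
  unfolding pair_nbhd_def by blast

lemma pair_nbhd_subset:
  assumes "set ls \<subseteq> slot_injections m" "X \<subseteq> {0..<7 * m}"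
  shows "pair_nbhd ls X \<subseteq> {0..<5 * m}"
proof
  fix v assume "v \<in> pair_nbhd ls X"
  then obtain l x where v: "v = l ! x div 2" "l \<in> set ls" "x \<in> X"
    by (auto simp: pair_nbhd_def)
  then have "x < length l" "set l \<subseteq> {0..<10 * m}"
    using assms by (auto simp: slot_injections_def subset_iff)
  then have "l ! x \<in> {0..<10 * m}" by (auto dest: nth_mem)
  then show "v \<in> {0..<5 * m}" using v(1) by auto
qed

lemma expanding_deficient_large:
  assumes "expanding m ls" "X \<subseteq> {0..<7 * m}" "card (pair_nbhd ls X) < card X"
  shows "7 * m \<le> 2 * card (pair_nbhd ls X)"
  using assms unfolding expanding_def by (meson le_less_trans not_le)

definition slots :: "nat \<Rightarrow> nat set \<Rightarrow> nat set" where
  "slots N W = {s \<in> {0..<N}. s div 2 \<in> W}"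

lemma card_slots:
  assumes "W \<subseteq> {0..<k}"
  shows "card (slots (2 * k) W) = 2 * card W"
proof -
  have "finite W" using assms finite_subset by blast
  have "slots (2 * k) W = (\<lambda>s. 2 * s) ` W \<union> (\<lambda>s. 2 * s + 1) ` W"
  proof (rule set_eqI)
    fix s :: nat
    have "s = 2 * (s div 2) \<or> s = 2 * (s div 2) + 1" by presburger
    then show "s \<in> slots (2 * k) W \<longleftrightarrow> s \<in> (\<lambda>s. 2 * s) ` W \<union> (\<lambda>s. 2 * s + 1) ` W"
      using assms by (auto simp: slots_def)
  qed
  also have "card \<dots> = card ((\<lambda>s. 2 * s) ` W) + card ((\<lambda>s. 2 * s + 1) ` W)"
    using \<open>finite W\<close> by (intro card_Un_disjoint) (auto, presburger)
  also have "\<dots> = 2 * card W" by (simp add: card_image inj_on_def)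
  finally show ?thesis .
qed

text \<open>The bad events of the union bound.\<close>
definition confined :: "nat \<Rightarrow> nat set \<Rightarrow> nat set \<Rightarrow> nat list list set" where
  "confined m X W = {ls. length ls = 32 \<and> set ls \<subseteq> slot_injections m \<and> pair_nbhd ls X \<subseteq> W}"

lemma confined_subset_lists_through:
  assumes "X \<subseteq> {0..<7 * m}"
  shows "confined m X W \<subseteq>
    {ls. set ls \<subseteq> lists_through (7 * m) {0..<10 * m} (slots (10 * m) W) X \<and> length ls = 32}"
proof safe
  fix ls l assume ls: "ls \<in> confined m X W" and l: "l \<in> set ls"
  then have "l \<in> slot_injections m" by (auto simp: confined_def)
  moreover have "l ! i div 2 \<in> W" if "i \<in> X" for i
    using ls l that by (auto simp: confined_def pair_nbhd_def)
  moreover have "l ! i < 10 * m" if "i \<in> X" for i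
  proof -
    have "i < length l" "set l \<subseteq> {0..<10 * m}"
      using \<open>l \<in> slot_injections m\<close> that assms by (auto simp: slot_injections_def)
    then show ?thesis by (auto dest: nth_mem)
  qed
  ultimately show "l \<in> lists_through (7 * m) {0..<10 * m} (slots (10 * m) W) X"
    by (auto simp: lists_through_def slot_injections_def slots_def)
qed (simp add: confined_def)

lemma card_confined_le:
  assumes "m \<ge> 1" "X \<subseteq> {0..<7 * m}" "W \<subseteq> {0..<5 * m}"
  shows "real (card (confined m X W))
    \<le> (real (card W) / (5 * real m)) ^ (card X * 32) * real (falling (10 * m) (7 * m)) ^ 32"
proof -
  let ?B = "{0..<10 * m}"
  let ?T = "lists_through (7 * m) ?B (slots (10 * m) W) X"
  have "finite ?T" by (simp add: finite_lists_through)
  then have "card (confined m X W) \<le> card {ls. set ls \<subseteq> ?T \<and> length ls = 32}"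
    by (intro card_mono finite_lists_length_eq confined_subset_lists_through assms(2))
  also have "\<dots> = card ?T ^ 32"
    using \<open>finite ?T\<close> by (rule card_lists_length_eq)
  finally have "real (card (confined m X W)) \<le> real (card ?T) ^ 32"
    by (metis of_nat_le_iff of_nat_power)
  also have "\<dots> \<le> ((real (card W) / (5 * real m)) ^ card X * real (falling (10 * m) (7 * m))) ^ 32"
  proof (intro power_mono)
    have "slots (10 * m) W \<subseteq> ?B" by (auto simp: slots_def)
    then have "real (card ?T) \<le> (real (card (slots (10 * m) W)) / real (card ?B)) ^ card X
        * real (falling (card ?B) (7 * m))"
      using assms by (intro card_lists_through_le_ratio) auto
    also have "card (slots (10 * m) W) = 2 * card W"
      using card_slots[of W "5 * m"] assms(3) by simp
    finally show "real (card ?T) \<le>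
        (real (card W) / (5 * real m)) ^ card X * real (falling (10 * m) (7 * m))"
      by simp
  qed simp
  finally show ?thesis by (simp add: power_mult_distrib power_mult)
qed

lemma card_UN_subsets_le:
  assumes "finite A" "finite B"
    and "\<And>X W. X \<subseteq> A \<Longrightarrow> card X = j \<Longrightarrow> W \<subseteq> B \<Longrightarrow> card W = k \<Longrightarrow> real (card (F X W)) \<le> c"
  shows "real (card (\<Union>X\<in>{X. X \<subseteq> A \<and> card X = j}. \<Union>W\<in>{W. W \<subseteq> B \<and> card W = k}. F X W))
    \<le> real (card A choose j) * real (card B choose k) * c"
proof -
  have fin: "finite {X. X \<subseteq> A \<and> card X = j}" "finite {W. W \<subseteq> B \<and> card W = k}"
    using assms(1,2) by simp_all
  have "card (\<Union>X\<in>{X. X \<subseteq> A \<and> card X = j}. \<Union>W\<in>{W. W \<subseteq> B \<and> card W = k}. F X W)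
      \<le> (\<Sum>X\<in>{X. X \<subseteq> A \<and> card X = j}. \<Sum>W\<in>{W. W \<subseteq> B \<and> card W = k}. card (F X W))"
    using fin by (intro order.trans[OF card_UN_le] sum_mono card_UN_le) auto
  then have "real (card (\<Union>X\<in>{X. X \<subseteq> A \<and> card X = j}. \<Union>W\<in>{W. W \<subseteq> B \<and> card W = k}. F X W))
      \<le> (\<Sum>X\<in>{X. X \<subseteq> A \<and> card X = j}. \<Sum>W\<in>{W. W \<subseteq> B \<and> card W = k}. real (card (F X W)))"
    by (simp flip: of_nat_sum)
  also have "\<dots> \<le> (\<Sum>X\<in>{X. X \<subseteq> A \<and> card X = j}. \<Sum>W\<in>{W. W \<subseteq> B \<and> card W = k}. c)"
    using assms(3) by (intro sum_mono) auto
  also have "\<dots> = real (card A choose j) * real (card B choose k) * c"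
    using assms(1,2) by (simp add: n_subsets)
  finally show ?thesis .
qed

definition bad_small :: "nat \<Rightarrow> nat list list set" where
  "bad_small m = (\<Union>j\<in>{1..m}. \<Union>X\<in>{X. X \<subseteq> {0..<7 * m} \<and> card X = j}.
     \<Union>W\<in>{W. W \<subseteq> {0..<5 * m} \<and> card W = j - 1}. confined m X W)"

definition bad_large :: "nat \<Rightarrow> nat list list set" where
  "bad_large m = (\<Union>X\<in>{X. X \<subseteq> {0..<7 * m} \<and> card X = m + 1}.
     \<Union>W\<in>{W. W \<subseteq> {0..<5 * m} \<and> card W = 7 * m div 2}. confined m X W)"

lemma not_expanding_bad:
  assumes ls: "length ls = 32" "set ls \<subseteq> slot_injections m" and "\<not> expanding m ls"
  shows "ls \<in> bad_small m \<union> bad_large m"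
proof (cases "\<forall>X \<subseteq> {0..<7 * m}. card X \<le> m \<longrightarrow> card X \<le> card (pair_nbhd ls X)")
  case False
  then obtain X where X: "X \<subseteq> {0..<7 * m}" "card X \<le> m" "card (pair_nbhd ls X) < card X"
    by (auto simp: not_le)
  have "pair_nbhd ls X \<subseteq> {0..<5 * m}" using pair_nbhd_subset[OF ls(2) X(1)] .
  moreover have "card (pair_nbhd ls X) \<le> card X - 1" "card X - 1 \<le> card {0..<5 * m}"
    using X by auto
  ultimately obtain W where W: "pair_nbhd ls X \<subseteq> W" "W \<subseteq> {0..<5 * m}" "card W = card X - 1"
    using exists_subset_between[of "pair_nbhd ls X" "card X - 1" "{0..<5 * m}"] by auto
  have "ls \<in> confined m X W" using ls W(1) by (simp add: confined_def)
  moreover have "card X \<in> {1..m}" using X by auto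
  ultimately show ?thesis using X(1) W(2,3) unfolding bad_small_def by blast
next
  case True
  then obtain X where X: "X \<subseteq> {0..<7 * m}" "m < card X" "2 * card (pair_nbhd ls X) < 7 * m"
    using assms(3) by (auto simp: expanding_def not_le)
  obtain X' where X': "X' \<subseteq> X" "card X' = m + 1"
    using obtain_subset_with_card_n[of "m + 1" X] X(2) by auto
  have "pair_nbhd ls X' \<subseteq> {0..<5 * m}" using pair_nbhd_subset[OF ls(2)] X X' by blast
  moreover have "card (pair_nbhd ls X') \<le> card (pair_nbhd ls X)"
    using pair_nbhd_subset[OF ls(2) X(1)] pair_nbhd_mono[OF X'(1)]
    by (intro card_mono) (auto intro: finite_subset)
  then have "card (pair_nbhd ls X') \<le> 7 * m div 2" "7 * m div 2 \<le> card {0..<5 * m}"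
    using X(3) by auto
  ultimately obtain W where W: "pair_nbhd ls X' \<subseteq> W" "W \<subseteq> {0..<5 * m}" "card W = 7 * m div 2"
    using exists_subset_between[of "pair_nbhd ls X'" "7 * m div 2" "{0..<5 * m}"] by auto
  have "ls \<in> confined m X' W" using ls W(1) by (simp add: confined_def)
  then show ?thesis using X X' W(2,3) unfolding bad_large_def by blast
qed

lemma card_bad_small_le:
  assumes "m \<ge> 1"
  shows "real (card (bad_small m)) \<le> 1/3 * real (falling (10 * m) (7 * m)) ^ 32"
proof -
  let ?L = "real (falling (10 * m) (7 * m)) ^ 32"
  let ?U = "\<lambda>j. \<Union>X\<in>{X. X \<subseteq> {0..<7 * m} \<and> card X = j}.
     \<Union>W\<in>{W. W \<subseteq> {0..<5 * m} \<and> card W = j - 1}. confined m X W"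
  have confined_le: "real (card (confined m X W)) \<le> (real j / (5 * real m)) ^ (j * 32) * ?L"
    if "X \<subseteq> {0..<7 * m}" "card X = j" "W \<subseteq> {0..<5 * m}" "card W = j - 1" for X W j
  proof -
    have "real (card (confined m X W)) \<le> (real (j - 1) / (5 * real m)) ^ (j * 32) * ?L"
      using that card_confined_le[OF assms, of X W] by simp
    also have "\<dots> \<le> (real j / (5 * real m)) ^ (j * 32) * ?L"
      by (intro mult_right_mono power_mono divide_right_mono) auto
    finally show ?thesis .
  qed
  have "real (card (bad_small m)) \<le> (\<Sum>j\<in>{1..m}. real (card (?U j)))"
    unfolding bad_small_def of_nat_sum[symmetric] of_nat_le_iff
    by (rule card_UN_le) simp
  also have "\<dots> \<le> (\<Sum>j\<in>{1..m}. real (7 * m choose j) * real (5 * m choose (j - 1))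
      * ((real j / (5 * real m)) ^ (j * 32) * ?L))"
    using card_UN_subsets_le[of "{0..<7 * m}" "{0..<5 * m}", OF _ _ confined_le]
    by (intro sum_mono) simp
  also have "\<dots> = (\<Sum>j\<in>{1..m}. real (7 * m choose j) * real (5 * m choose (j - 1))
      * (real j / (5 * real m)) ^ (j * 32) * ?L)"
    by (simp add: mult.assoc)
  also have "\<dots> \<le> (\<Sum>j\<in>{1..m}. (1/4) ^ j * ?L)"
    by (intro sum_mono mult_right_mono binomial_term_le_quarter_power) auto
  also have "\<dots> \<le> 1/3 * ?L"
    unfolding sum_distrib_right[symmetric]
    by (intro mult_right_mono sum_quarter_powers_le) simp
  finally show ?thesis .
qed

lemma card_bad_large_le:
  assumes "m \<ge> 1"
  shows "real (card (bad_large m)) \<le> 1/20 * real (falling (10 * m) (7 * m)) ^ 32"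
proof -
  let ?L = "real (falling (10 * m) (7 * m)) ^ 32"
  have confined_le: "real (card (confined m X W)) \<le> (7/10) ^ (32 * m) * ?L"
    if "X \<subseteq> {0..<7 * m}" "card X = m + 1" "W \<subseteq> {0..<5 * m}" "card W = 7 * m div 2" for X W
  proof -
    have "real (card W) / (5 * real m) \<le> 7/10"
      using that assms by (simp add: divide_simps)
    then have "(real (card W) / (5 * real m)) ^ ((m + 1) * 32) \<le> (7/10) ^ ((m + 1) * 32)"
      by (intro power_mono) auto
    also have "\<dots> \<le> (7/10) ^ (32 * m)"
      by (intro power_decreasing) auto
    finally have "(real (card W) / (5 * real m)) ^ (card X * 32) * ?L \<le> (7/10) ^ (32 * m) * ?L"
      using that(2) by (intro mult_right_mono) auto
    then show ?thesis
      using card_confined_le[OF assms that(1,3)] by linarith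
  qed
  have "real (card (bad_large m)) \<le> real (card {0..<7 * m} choose (m + 1))
      * real (card {0..<5 * m} choose (7 * m div 2)) * ((7/10) ^ (32 * m) * ?L)"
    unfolding bad_large_def
    by (rule card_UN_subsets_le[OF finite_atLeastLessThan finite_atLeastLessThan confined_le])
  also have "\<dots> = real (7 * m choose (m + 1)) * real (5 * m choose (7 * m div 2))
      * (7/10) ^ (32 * m) * ?L"
    by simp
  also have "\<dots> \<le> 1/20 * ?L"
    by (intro mult_right_mono binomials_mult_power_le assms) simp
  finally show ?thesis .
qed

theorem exists_expanding_lists:
  assumes "m \<ge> 1"
  shows "\<exists>ls. length ls = 32 \<and> set ls \<subseteq> slot_injections m \<and> expanding m ls"
proof -
  let ?T = "{ls. set ls \<subseteq> slot_injections m \<and> length ls = 32}"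
  let ?L = "falling (10 * m) (7 * m)"
  have fin: "finite (slot_injections m)"
    unfolding slot_injections_def
    by (rule finite_subset[OF _ finite_lists_length_eq[of "{0..<10 * m}" "7 * m"]]) auto
  have "card (slot_injections m) = ?L"
    unfolding slot_injections_def using card_distinct_lists[of "{0..<10 * m}" "7 * m"] by simp
  then have card_T: "card ?T = ?L ^ 32"
    using card_lists_length_eq[OF fin] by simp
  have bad: "{ls \<in> ?T. \<not> expanding m ls} \<subseteq> bad_small m \<union> bad_large m"
    using not_expanding_bad by blast
  have "bad_small m \<union> bad_large m \<subseteq> ?T"
    unfolding bad_small_def bad_large_def confined_def by blast
  then have "finite (bad_small m \<union> bad_large m)"
    using finite_lists_length_eq[OF fin] finite_subset by blast
  then have "real (card {ls \<in> ?T. \<not> expanding m ls}) \<le> real (card (bad_small m))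
      + real (card (bad_large m))"
    using card_mono[OF _ bad] card_Un_le[of "bad_small m" "bad_large m"] by linarith
  also have "\<dots> \<le> (1/3 + 1/20) * real ?L ^ 32"
    using card_bad_small_le[OF assms] card_bad_large_le[OF assms] by simp
  also have "\<dots> < real (card ?T)"
    using falling_pos[of "7 * m" "10 * m"] card_T by simp
  finally have "{ls \<in> ?T. \<not> expanding m ls} \<noteq> ?T" by auto
  then show ?thesis by blast
qed

section \<open>The graph\<close>

definition list_edges :: "nat list list \<Rightarrow> nat \<Rightarrow> nat \<Rightarrow> nat \<Rightarrow> (nat \<times> nat) set" where
  "list_edges ls n a c = {(a + x, c + l ! x div 2) | x l. x < n \<and> l \<in> set ls}"

text \<open>The vertex classes are \<open>A\<^sub>1 = {0..<2 m}\<close>, \<open>A\<^sub>2 = {2 m..<7 m}\<close>, \<open>B\<^sub>1 = {7 m..<9 m}\<close> and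
  \<open>B\<^sub>2 = {9 m..<14 m}\<close>: the lists \<open>lf\<close> join every vertex of \<open>A\<^sub>1 \<union> A\<^sub>2\<close> to \<open>B\<^sub>2\<close>, the lists \<open>lg\<close>
  every vertex of \<open>B\<^sub>1 \<union> B\<^sub>2\<close> to \<open>A\<^sub>2\<close>.\<close>
definition matching_graph :: "nat \<Rightarrow> nat list list \<Rightarrow> nat list list \<Rightarrow> (nat \<times> nat) set" where
  "matching_graph m lf lg =
     list_edges lf (7 * m) 0 (9 * m) \<union> prod.swap ` list_edges lg (7 * m) (7 * m) (2 * m)"

lemma list_edges_eq_image:
  "list_edges ls n a c = (\<lambda>(x, l). (a + x, c + l ! x div 2)) ` ({0..<n} \<times> set ls)"
  unfolding list_edges_def by auto

lemma finite_list_edges: "finite (list_edges ls n a c)"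
  unfolding list_edges_eq_image by simp

lemma card_list_edges_le: "card (list_edges ls n a c) \<le> n * length ls"
proof -
  have "card (list_edges ls n a c) \<le> card ({0..<n} \<times> set ls)"
    unfolding list_edges_eq_image by (rule card_image_le) simp
  also have "\<dots> \<le> n * length ls"
    by (simp add: card_cartesian_product card_length)
  finally show ?thesis .
qed

lemma list_edges_subset:
  assumes "set ls \<subseteq> slot_injections m"
  shows "list_edges ls (7 * m) a c \<subseteq> {a..<a + 7 * m} \<times> {c..<c + 5 * m}"
proof
  fix e assume "e \<in> list_edges ls (7 * m) a c"
  then obtain x l where e: "e = (a + x, c + l ! x div 2)" "x < 7 * m" "l \<in> set ls"
    by (auto simp: list_edges_def)
  then have "l ! x div 2 \<in> pair_nbhd ls {0..<7 * m}"
    by (auto simp: pair_nbhd_def)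
  then show "e \<in> {a..<a + 7 * m} \<times> {c..<c + 5 * m}"
    using pair_nbhd_subset[OF assms, of "{0..<7 * m}"] e by auto
qed

lemma card_list_edges_fst_le: "card {e \<in> list_edges ls n a c. fst e = v} \<le> length ls"
proof -
  have "{e \<in> list_edges ls n a c. fst e = v} \<subseteq> (\<lambda>l. (v, c + l ! (v - a) div 2)) ` set ls"
    by (auto simp: list_edges_def)
  then have "card {e \<in> list_edges ls n a c. fst e = v} \<le> card (set ls)"
    by (meson List.finite_set card_image_le card_mono finite_imageI order_trans)
  then show ?thesis using card_length order_trans by blast
qed

text \<open>A distinct list hits each of the two slots \<open>2 v\<close> and \<open>2 v + 1\<close> of the vertex \<open>v\<close> at most once.\<close>
lemma card_positions_div2_le:
  fixes l :: "nat list"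
  assumes "distinct l"
  shows "card {x. x < length l \<and> l ! x div 2 = v} \<le> 2"
proof -
  have "inj_on (nth l) {x. x < length l \<and> l ! x div 2 = v}"
    using assms by (auto simp: inj_on_def nth_eq_iff_index_eq)
  moreover have "nth l ` {x. x < length l \<and> l ! x div 2 = v} \<subseteq> {2 * v, 2 * v + 1}"
    by auto
  ultimately have "card {x. x < length l \<and> l ! x div 2 = v} \<le> card {2 * v, 2 * v + 1}"
    by (intro card_inj_on_le) auto
  also have "\<dots> \<le> 2" by (simp add: card_insert_if)
  finally show ?thesis .
qed

lemma card_list_edges_snd_le:
  assumes "\<forall>l\<in>set ls. distinct l \<and> length l = n"
  shows "card {e \<in> list_edges ls n a c. snd e = v} \<le> 2 * length ls"
proof -
  let ?P = "\<lambda>l. {x. x < length l \<and> l ! x div 2 = v - c}"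
  have "{e \<in> list_edges ls n a c. snd e = v} \<subseteq> (\<Union>l\<in>set ls. (\<lambda>x. (a + x, v)) ` ?P l)"
    using assms by (auto simp: list_edges_def)
  then have "card {e \<in> list_edges ls n a c. snd e = v} \<le> card (\<Union>l\<in>set ls. (\<lambda>x. (a + x, v)) ` ?P l)"
    by (intro card_mono) auto
  also have "\<dots> \<le> (\<Sum>l\<in>set ls. card ((\<lambda>x. (a + x, v)) ` ?P l))"
    by (rule card_UN_le) simp
  also have "\<dots> \<le> (\<Sum>l\<in>set ls. 2)"
    using assms by (intro sum_mono order.trans[OF card_image_le card_positions_div2_le]) auto
  also have "\<dots> \<le> 2 * length ls" by (simp add: card_length)
  finally show ?thesis .
qed

lemma bdegree_le_of_bipartite:
  assumes "E \<subseteq> A \<times> B" "A \<inter> B = {}"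
    and "card {e \<in> E. fst e = v} \<le> d" "card {e \<in> E. snd e = v} \<le> d"
  shows "bdegree E v \<le> d"
proof (cases "v \<in> A")
  case True
  then have "{e \<in> E. fst e = v \<or> snd e = v} = {e \<in> E. fst e = v}" using assms(1,2) by auto
  then show ?thesis using assms(3) by (simp add: bdegree_def)
next
  case False
  then have "{e \<in> E. fst e = v \<or> snd e = v} = {e \<in> E. snd e = v}" using assms(1) by auto
  then show ?thesis using assms(4) by (simp add: bdegree_def)
qed

lemma bdegree_mono: "finite F \<Longrightarrow> E \<subseteq> F \<Longrightarrow> bdegree E v \<le> bdegree F v"
  unfolding bdegree_def by (rule card_mono) auto

lemma bdegree_insert_le:
  assumes "finite E"
  shows "bdegree (insert e E) v \<le> Suc (bdegree E v)"
proof -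
  let ?P = "\<lambda>e. fst e = v \<or> snd e = v"
  have "card {e' \<in> insert e E. ?P e'} \<le> card (insert e {e' \<in> E. ?P e'})"
    using assms by (intro card_mono) auto
  also have "\<dots> \<le> Suc (card {e' \<in> E. ?P e'})"
    using assms by (simp add: card_insert_if)
  finally show ?thesis by (simp add: bdegree_def)
qed

lemma exists_odd_extension:
  assumes "finite U" "E0 \<subseteq> U" "E0 \<noteq> U"
  shows "\<exists>e E. E0 \<subseteq> E \<and> E \<subseteq> insert e E0 \<and> E \<subseteq> U \<and> odd (card E)"
proof -
  obtain e where e: "e \<in> U" "e \<notin> E0" using assms(2,3) by blast
  have "finite E0" using finite_subset[OF assms(2,1)] .
  show ?thesis
  proof (cases "odd (card E0)")
    case True
    then show ?thesis using assms(2) by blast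
  next
    case False
    then show ?thesis
      using e \<open>finite E0\<close> assms(2) by (intro exI[of _ e] exI[of _ "insert e E0"]) auto
  qed
qed

lemma card_add_le_of_subset_Un_Diff:
  assumes "finite P" "finite R" "C \<subseteq> P \<union> (R - D)" "D \<subseteq> R"
  shows "card C + card D \<le> card P + card R"
proof -
  have "card C \<le> card (P \<union> (R - D))"
    using assms by (intro card_mono) auto
  also have "\<dots> \<le> card P + card (R - D)" by (rule card_Un_le)
  finally show ?thesis
    using assms(2,4) card_mono[OF assms(2,4)] by (simp add: card_Diff_subset finite_subset)
qed

lemma shift_pair_nbhd_subset_neighbours:
  assumes "S \<subseteq> {0..<7 * m}" "set lf \<subseteq> slot_injections m"
  shows "(+) (9 * m) ` pair_nbhd lf S \<subseteq> neighbours (matching_graph m lf lg) S {9 * m..<14 * m}"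
proof
  fix z assume "z \<in> (+) (9 * m) ` pair_nbhd lf S"
  then obtain v where v: "z = 9 * m + v" "v \<in> pair_nbhd lf S" by blast
  then obtain l x where "v = l ! x div 2" "l \<in> set lf" "x \<in> S"
    by (auto simp: pair_nbhd_def)
  moreover have "x < 7 * m" using \<open>x \<in> S\<close> assms(1) by auto
  ultimately have "(x, z) \<in> list_edges lf (7 * m) 0 (9 * m)"
    using v(1) unfolding list_edges_def by auto
  then have "(x, z) \<in> matching_graph m lf lg" by (simp add: matching_graph_def)
  moreover have "z \<in> {9 * m..<14 * m}"
    using pair_nbhd_subset[OF assms(2,1)] v by auto
  ultimately show "z \<in> neighbours (matching_graph m lf lg) S {9 * m..<14 * m}"
    using \<open>x \<in> S\<close> by (auto simp: neighbours_def)
qed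

lemma shift_pair_nbhd_subset_converse_neighbours:
  assumes "Y \<subseteq> {7 * m..<14 * m}" "set lg \<subseteq> slot_injections m"
  shows "(+) (2 * m) ` pair_nbhd lg ((\<lambda>y. y - 7 * m) ` Y)
    \<subseteq> neighbours (converse (matching_graph m lf lg)) Y {2 * m..<7 * m}"
proof
  fix z assume "z \<in> (+) (2 * m) ` pair_nbhd lg ((\<lambda>y. y - 7 * m) ` Y)"
  then obtain l y where z: "z = 2 * m + l ! (y - 7 * m) div 2" "l \<in> set lg" "y \<in> Y"
    by (auto simp: pair_nbhd_def)
  moreover have "y \<in> {7 * m..<14 * m}" using assms(1) z(3) by blast
  then have "y - 7 * m < 7 * m" "y = 7 * m + (y - 7 * m)" by auto
  ultimately have "(y, z) \<in> list_edges lg (7 * m) (7 * m) (2 * m)"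
    unfolding list_edges_def by blast
  then have "(z, y) \<in> matching_graph m lf lg" by (auto simp: matching_graph_def)
  moreover have "z \<in> {2 * m..<7 * m}"
    using subsetD[OF list_edges_subset[OF assms(2), of "7 * m" "2 * m"]
        \<open>(y, z) \<in> list_edges lg (7 * m) (7 * m) (2 * m)\<close>] by auto
  ultimately show "z \<in> neighbours (converse (matching_graph m lf lg)) Y {2 * m..<7 * m}"
    using z(3) by (auto simp: neighbours_def)
qed

lemma deficient_sees_half_B2:
  assumes "expanding m lf" "set lf \<subseteq> slot_injections m" "S \<subseteq> {0..<7 * m}"
    and "card (neighbours (matching_graph m lf lg) S {9 * m..<14 * m}) < card S"
  shows "7 * m \<le> 2 * card (neighbours (matching_graph m lf lg) S {9 * m..<14 * m})"
proof -
  let ?N = "neighbours (matching_graph m lf lg) S {9 * m..<14 * m}"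
  have "finite ?N" by (simp add: neighbours_def)
  then have le: "card (pair_nbhd lf S) \<le> card ?N"
    using card_mono[OF _ shift_pair_nbhd_subset_neighbours[OF assms(3,2)]] by (simp add: card_image)
  then have "card (pair_nbhd lf S) < card S" using assms(4) by linarith
  then have "7 * m \<le> 2 * card (pair_nbhd lf S)"
    by (rule expanding_deficient_large[OF assms(1,3)])
  with le show ?thesis by linarith
qed

lemma deficient_sees_half_A2:
  assumes "expanding m lg" "set lg \<subseteq> slot_injections m" "Y \<subseteq> {7 * m..<14 * m}"
    and "card (neighbours (converse (matching_graph m lf lg)) Y {2 * m..<7 * m}) < card Y"
  shows "7 * m \<le> 2 * card (neighbours (converse (matching_graph m lf lg)) Y {2 * m..<7 * m})"
proof -
  let ?N = "neighbours (converse (matching_graph m lf lg)) Y {2 * m..<7 * m}"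
  let ?Y = "(\<lambda>y. y - 7 * m) ` Y"
  have "inj_on (\<lambda>y. y - 7 * m) Y" using assms(3) by (intro inj_on_diff_nat) auto
  then have card_Y: "card ?Y = card Y" by (rule card_image)
  have "?Y \<subseteq> {0..<7 * m}" using assms(3) by (fastforce simp: subset_iff)
  have "finite ?N" by (simp add: neighbours_def)
  then have le: "card (pair_nbhd lg ?Y) \<le> card ?N"
    using card_mono[OF _ shift_pair_nbhd_subset_converse_neighbours[OF assms(3,2)]]
    by (simp add: card_image)
  then have "card (pair_nbhd lg ?Y) < card ?Y" using assms(4) card_Y by linarith
  then have "7 * m \<le> 2 * card (pair_nbhd lg ?Y)"
    by (rule expanding_deficient_large[OF assms(1) \<open>?Y \<subseteq> {0..<7 * m}\<close>])
  with le show ?thesis by linarith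
qed

text \<open>A Hall violator \<open>S\<close> sees at least half of \<open>B\<^sub>2\<close>; the set \<open>Y\<close> of vertices it misses is a Hall
  violator in the reverse direction and so sees at least half of \<open>A\<^sub>2\<close>, all outside \<open>S\<close>. Counting
  \<open>S\<close> and \<open>Y\<close> against these halves forces \<open>card A\<^sub>1' > 2 m\<close>.\<close>
lemma hall_condition_matching_graph:
  assumes f: "expanding m lf" "set lf \<subseteq> slot_injections m"
    and g: "expanding m lg" "set lg \<subseteq> slot_injections m"
    and A1': "A1' \<subseteq> {0..<2 * m}" and B1': "B1' \<subseteq> {7 * m..<9 * m}"
    and card_eq: "card A1' = card B1'"
  shows "hall_condition (matching_graph m lf lg) (A1' \<union> {2 * m..<7 * m}) (B1' \<union> {9 * m..<14 * m})"
  unfolding hall_condition_def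
proof (intro allI impI, rule ccontr)
  let ?E = "matching_graph m lf lg"
  let ?X = "A1' \<union> {2 * m..<7 * m}" and ?Y = "B1' \<union> {9 * m..<14 * m}"
  fix S assume S: "S \<subseteq> ?X" and "\<not> card S \<le> card (neighbours ?E S ?Y)"
  define NS where "NS = neighbours ?E S ?Y"
  define N2 where "N2 = neighbours ?E S {9 * m..<14 * m}"
  define Y where "Y = ?Y - NS"
  define M where "M = neighbours (converse ?E) Y {2 * m..<7 * m}"
  have deficient: "card NS < card S" using \<open>\<not> _\<close> by (simp add: NS_def)
  have fin: "finite A1'" "finite B1'" using A1' B1' finite_subset by blast+
  have card_X: "card ?X = card A1' + 5 * m" and card_Y: "card ?Y = card A1' + 5 * m"
    using A1' B1' fin card_eq by (subst card_Un_disjoint; force)+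
  have "S \<subseteq> {0..<7 * m}" using S A1' by fastforce
  have "NS \<subseteq> ?Y" "N2 \<subseteq> NS" by (auto simp: NS_def N2_def neighbours_def)
  have "finite ?X" "finite ?Y" using fin by simp_all
  then have "card N2 \<le> card NS"
    using card_mono[OF _ \<open>N2 \<subseteq> NS\<close>] \<open>NS \<subseteq> ?Y\<close> finite_subset by blast
  then have half_B2: "7 * m \<le> 2 * card N2"
    using deficient unfolding N2_def
    by (intro deficient_sees_half_B2[OF f \<open>S \<subseteq> {0..<7 * m}\<close>]) simp
  have "M \<subseteq> {2 * m..<7 * m} - S" by (auto simp: M_def Y_def NS_def neighbours_def)
  then have "card M \<le> card ?X - card S"
    using card_mono[of "?X - S" M] \<open>finite ?X\<close> S by (auto simp: card_Diff_subset finite_subset)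
  moreover have card_Y_S: "card Y = card ?Y - card NS"
    unfolding Y_def using \<open>NS \<subseteq> ?Y\<close> \<open>finite ?Y\<close> by (simp add: card_Diff_subset finite_subset)
  ultimately have "card M < card Y"
    using card_X card_Y deficient card_mono[OF \<open>finite ?X\<close> S] by linarith
  moreover have "Y \<subseteq> {7 * m..<14 * m}" using B1' by (auto simp: Y_def)
  ultimately have half_A2: "7 * m \<le> 2 * card M"
    unfolding M_def by (intro deficient_sees_half_A2[OF g]) auto
  have "card Y + card N2 \<le> card B1' + card {9 * m..<14 * m}"
    using \<open>N2 \<subseteq> NS\<close> fin
    by (intro card_add_le_of_subset_Un_Diff) (auto simp: Y_def N2_def neighbours_def)
  moreover have "card S + card M \<le> card A1' + card {2 * m..<7 * m}"
    using \<open>M \<subseteq> {2 * m..<7 * m} - S\<close> S fin by (intro card_add_le_of_subset_Un_Diff) auto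
  moreover have "card A1' \<le> 2 * m" using card_mono[OF _ A1'] by simp
  ultimately show False
    using half_B2 half_A2 card_Y card_Y_S deficient card_eq by simp
qed

lemma matching_graph_subset:
  assumes "set lf \<subseteq> slot_injections m" "set lg \<subseteq> slot_injections m"
  shows "matching_graph m lf lg \<subseteq> {0..<7 * m} \<times> {7 * m..<14 * m}"
  using list_edges_subset[OF assms(1), of 0 "9 * m"] list_edges_subset[OF assms(2), of "7 * m" "2 * m"]
  by (fastforce simp: matching_graph_def)

lemma card_matching_graph_le:
  "card (matching_graph m lf lg) \<le> 7 * m * length lf + 7 * m * length lg"
proof -
  have "card (matching_graph m lf lg)
      \<le> card (list_edges lf (7 * m) 0 (9 * m)) + card (prod.swap ` list_edges lg (7 * m) (7 * m) (2 * m))"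
    unfolding matching_graph_def by (rule card_Un_le)
  also have "\<dots> \<le> 7 * m * length lf + 7 * m * length lg"
    using card_list_edges_le by (intro add_mono) (simp_all add: card_image)
  finally show ?thesis .
qed

lemma card_edges_Un_swap_le:
  assumes "finite E" "finite F"
  shows "card {e \<in> E \<union> prod.swap ` F. P (fst e) (snd e)}
    \<le> card {e \<in> E. P (fst e) (snd e)} + card {e \<in> F. P (snd e) (fst e)}"
proof -
  have "{e \<in> E \<union> prod.swap ` F. P (fst e) (snd e)}
      = {e \<in> E. P (fst e) (snd e)} \<union> prod.swap ` {e \<in> F. P (snd e) (fst e)}"
    by auto
  also have "card \<dots> \<le> card {e \<in> E. P (fst e) (snd e)} + card (prod.swap ` {e \<in> F. P (snd e) (fst e)})"
    by (rule card_Un_le)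
  finally show ?thesis by (simp add: card_image)
qed

lemma bdegree_matching_graph_le:
  assumes "set lf \<subseteq> slot_injections m" "set lg \<subseteq> slot_injections m"
    and "length lf = d" "length lg = d"
  shows "bdegree (matching_graph m lf lg) v \<le> 3 * d"
proof (rule bdegree_le_of_bipartite[OF matching_graph_subset[OF assms(1,2)]])
  let ?Ef = "list_edges lf (7 * m) 0 (9 * m)" and ?Eg = "list_edges lg (7 * m) (7 * m) (2 * m)"
  have distinct: "\<forall>l\<in>set ls. distinct l \<and> length l = 7 * m" if "set ls \<subseteq> slot_injections m" for ls
    using that by (auto simp: slot_injections_def)
  have "card {e \<in> matching_graph m lf lg. fst e = v}
      \<le> card {e \<in> ?Ef. fst e = v} + card {e \<in> ?Eg. snd e = v}"
    unfolding matching_graph_def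
    using card_edges_Un_swap_le[OF finite_list_edges finite_list_edges, where P = "\<lambda>a b. a = v"] by simp
  also have "\<dots> \<le> 3 * d"
    using card_list_edges_fst_le[of lf "7 * m" 0 "9 * m" v]
      card_list_edges_snd_le[OF distinct[OF assms(2)], of "7 * m" "2 * m" v] assms(3,4) by linarith
  finally show "card {e \<in> matching_graph m lf lg. fst e = v} \<le> 3 * d" .
  have "card {e \<in> matching_graph m lf lg. snd e = v}
      \<le> card {e \<in> ?Ef. snd e = v} + card {e \<in> ?Eg. fst e = v}"
    unfolding matching_graph_def
    using card_edges_Un_swap_le[OF finite_list_edges finite_list_edges, where P = "\<lambda>a b. b = v"] by simp
  also have "\<dots> \<le> 3 * d"
    using card_list_edges_snd_le[OF distinct[OF assms(1)], of 0 "9 * m" v]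
      card_list_edges_fst_le[of lg "7 * m" "7 * m" "2 * m" v] assms(3,4) by linarith
  finally show "card {e \<in> matching_graph m lf lg. snd e = v} \<le> 3 * d" .
qed auto

lemma finite_matching_graph: "finite (matching_graph m lf lg)"
  by (simp add: matching_graph_def finite_list_edges)

lemma perfect_matching_in_supergraph:
  assumes f: "expanding m lf" "set lf \<subseteq> slot_injections m"
    and g: "expanding m lg" "set lg \<subseteq> slot_injections m"
    and "matching_graph m lf lg \<subseteq> E"
    and A1': "A1' \<subseteq> {0..<2 * m}" and B1': "B1' \<subseteq> {7 * m..<9 * m}" and "card A1' = card B1'"
  shows "\<exists>M. perfect_matching_between E (A1' \<union> {2 * m..<7 * m}) (B1' \<union> {9 * m..<14 * m}) M"
proof (rule hall_perfect_matching)
  have "finite A1'" "finite B1'" using A1' B1' finite_subset by blast+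
  moreover have "A1' \<inter> {2 * m..<7 * m} = {}" "B1' \<inter> {9 * m..<14 * m} = {}"
    using A1' B1' by auto
  ultimately show "card (A1' \<union> {2 * m..<7 * m}) = card (B1' \<union> {9 * m..<14 * m})"
    using \<open>card A1' = card B1'\<close> by (simp add: card_Un_disjoint)
  show "hall_condition E (A1' \<union> {2 * m..<7 * m}) (B1' \<union> {9 * m..<14 * m})"
    using \<open>finite B1'\<close>
    by (intro hall_condition_mono[OF hall_condition_matching_graph[OF assms(1-4,6-8)] assms(5)]) simp
qed (use A1' B1' finite_subset in auto)

lemma matching_graph_construction:
  fixes m :: nat
  assumes "m \<ge> 10"
  shows "\<exists>E. bip_graph {0..<7 * m} {7 * m..<14 * m} E \<and> odd (card E) \<and>
    max_degree_le {0..<7 * m} {7 * m..<14 * m} E 102 \<and>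
    (\<forall>A1' B1'. A1' \<subseteq> {0..<2 * m} \<and> B1' \<subseteq> {7 * m..<9 * m} \<and> card A1' = card B1' \<longrightarrow>
       (\<exists>M. perfect_matching_between E (A1' \<union> {2 * m..<7 * m}) (B1' \<union> {9 * m..<14 * m}) M))"
proof -
  obtain lf lg where lf: "length lf = 32" "set lf \<subseteq> slot_injections m" "expanding m lf"
    and lg: "length lg = 32" "set lg \<subseteq> slot_injections m" "expanding m lg"
    using exists_expanding_lists[of m] assms by auto
  let ?U = "{0..<7 * m} \<times> {7 * m..<14 * m}"
  let ?E0 = "matching_graph m lf lg"
  have "card ?E0 \<le> 448 * m"
    using card_matching_graph_le[of m lf lg] lf(1) lg(1) by simp
  also have "\<dots> < 49 * m * m"
    using assms mult_le_mono1[of 10 m "49 * m"] by simp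
  also have "\<dots> = card ?U" by (simp add: card_cartesian_product)
  finally have "card ?E0 < card ?U" .
  then have "?E0 \<noteq> ?U" by (metis less_irrefl)
  moreover have "finite ?U" by simp
  ultimately obtain e E where E: "?E0 \<subseteq> E" "E \<subseteq> insert e ?E0" "E \<subseteq> ?U" "odd (card E)"
    using exists_odd_extension[OF \<open>finite ?U\<close> matching_graph_subset[OF lf(2) lg(2)]] by blast
  have "bdegree E v \<le> 102" for v
  proof -
    have "bdegree E v \<le> bdegree (insert e ?E0) v"
      using E(2) finite_matching_graph by (intro bdegree_mono) auto
    also have "\<dots> \<le> Suc (bdegree ?E0 v)"
      by (rule bdegree_insert_le[OF finite_matching_graph])
    also have "bdegree ?E0 v \<le> 3 * 32"
      by (rule bdegree_matching_graph_le[OF lf(2) lg(2) lf(1) lg(1)])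
    finally show ?thesis by simp
  qed
  moreover have "\<exists>M. perfect_matching_between E (A1' \<union> {2 * m..<7 * m}) (B1' \<union> {9 * m..<14 * m}) M"
    if "A1' \<subseteq> {0..<2 * m}" "B1' \<subseteq> {7 * m..<9 * m}" "card A1' = card B1'" for A1' B1'
    by (rule perfect_matching_in_supergraph[OF lf(3,2) lg(3,2) E(1) that])
  ultimately show ?thesis
    using E(3,4) unfolding bip_graph_def max_degree_le_def by (intro exI[of _ E]) auto
qed

theorem mainTheorem7:
  shows "\<exists>m0::nat. \<forall>m\<ge>m0. \<exists>(A1::nat set) A2 B1 B2 (E::(nat \<times> nat) set).
     A1 \<inter> A2 = {} \<and> A1 \<inter> B1 = {} \<and> A1 \<inter> B2 = {} \<and>
     A2 \<inter> B1 = {} \<and> A2 \<inter> B2 = {} \<and> B1 \<inter> B2 = {} \<and>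
     finite A1 \<and> finite A2 \<and> finite B1 \<and> finite B2 \<and>
     card A1 = 2 * m \<and> card B1 = 2 * m \<and> card A2 = 5 * m \<and> card B2 = 5 * m \<and>
     bip_graph (A1 \<union> A2) (B1 \<union> B2) E \<and>
     odd (card E) \<and>
     max_degree_le (A1 \<union> A2) (B1 \<union> B2) E 102 \<and>
     (\<forall>A1' B1'. A1' \<subseteq> A1 \<and> B1' \<subseteq> B1 \<and> card A1' = card B1' \<and> card A1' \<ge> m \<longrightarrow>
        (\<exists>M. perfect_matching_between E (A1' \<union> A2) (B1' \<union> B2) M))"
proof (intro exI[of _ 10] allI impI, goal_cases)
  case (1 m)
  then obtain E where E: "bip_graph {0..<7 * m} {7 * m..<14 * m} E" "odd (card E)"
    "max_degree_le {0..<7 * m} {7 * m..<14 * m} E 102"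
    "\<forall>A1' B1'. A1' \<subseteq> {0..<2 * m} \<and> B1' \<subseteq> {7 * m..<9 * m} \<and> card A1' = card B1' \<longrightarrow>
       (\<exists>M. perfect_matching_between E (A1' \<union> {2 * m..<7 * m}) (B1' \<union> {9 * m..<14 * m}) M)"
    using matching_graph_construction by blast
  have parts: "{0..<2 * m} \<union> {2 * m..<7 * m} = {0..<7 * m}"
    "{7 * m..<9 * m} \<union> {9 * m..<14 * m} = {7 * m..<14 * m}"
    by auto
  show ?case
    by (intro exI[of _ "{0..<2 * m}"] exI[of _ "{2 * m..<7 * m}"] exI[of _ "{7 * m..<9 * m}"]
        exI[of _ "{9 * m..<14 * m}"] exI[of _ E] conjI) (simp_all add: parts E)
qed

end
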